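(* Let $\mathbf A$ be a finite subdirectly irreducible cBCK-algebra and let $\mathbf B$ be a subalgebra of $\mathbf A$. If there exist $a,b\in B$ such that $\gcd(\mathrm{h}_A(a),\mathrm{h}_A(b))=1$, then the universe $B$ is a downset of $\mathbf A$ (i.e., $x\in B$ and $y\le x$ in $\mathbf A$ imply $y\in B$).
   Context: A BCK-algebra is an algebra $(A,\ominus,0)$ of type $(2,0)$ satisfying $((x\ominus y)\ominus(x\ominus z))\ominus(z\ominus y)=0$, $x\ominus 0=x$, $0\ominus x=0$, and ($x\ominus y=0$ and $y\ominus x=0$ imply $x=y$); it is ordered by $x\le y$ iff $x\ominus y=0$. A cBCK-algebra is a BCK-algebra satisfying $x\ominus(x\ominus y)=y\ominus(y\ominus x)$; its order is a meet-semilattice with $x\wedge y=x\ominus(x\ominus y)$. Finite subdirectly irreducible cBCK-algebras are, as posets, rooted trees with root $0$ (with a unique atom if nontrivial). For $a\in A$, $\mathrm{h}_A(a)=|[0,a]|-1$ is the height of $a$ in $\mathbf A$. *)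

theory Defs
  imports Main
begin

definition BCK_algebra :: "'a set \<Rightarrow> ('a \<Rightarrow> 'a \<Rightarrow> 'a) \<Rightarrow> 'a \<Rightarrow> bool" where
  "BCK_algebra A m z \<longleftrightarrow>
     z \<in> A \<and> (\<forall>x\<in>A. \<forall>y\<in>A. m x y \<in> A) \<and>
     (\<forall>x\<in>A. \<forall>y\<in>A. \<forall>u\<in>A. m (m (m x y) (m x u)) (m u y) = z) \<and>
     (\<forall>x\<in>A. m x z = x) \<and>
     (\<forall>x\<in>A. m z x = z) \<and>
     (\<forall>x\<in>A. \<forall>y\<in>A. m x y = z \<and> m y x = z \<longrightarrow> x = y)"

definition cBCK_algebra :: "'a set \<Rightarrow> ('a \<Rightarrow> 'a \<Rightarrow> 'a) \<Rightarrow> 'a \<Rightarrow> bool" where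
  "cBCK_algebra A m z \<longleftrightarrow> BCK_algebra A m z \<and>
     (\<forall>x\<in>A. \<forall>y\<in>A. m x (m x y) = m y (m y x))"

definition bck_le :: "('a \<Rightarrow> 'a \<Rightarrow> 'a) \<Rightarrow> 'a \<Rightarrow> 'a \<Rightarrow> 'a \<Rightarrow> bool" where
  "bck_le m z x y \<longleftrightarrow> m x y = z"

definition congruence :: "'a set \<Rightarrow> ('a \<Rightarrow> 'a \<Rightarrow> 'a) \<Rightarrow> ('a \<times> 'a) set \<Rightarrow> bool" where
  "congruence A m \<theta> \<longleftrightarrow> equiv A \<theta> \<and>
     (\<forall>x1 y1 x2 y2. (x1, y1) \<in> \<theta> \<and> (x2, y2) \<in> \<theta> \<longrightarrow> (m x1 x2, m y1 y2) \<in> \<theta>)"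

definition subdirectly_irreducible :: "'a set \<Rightarrow> ('a \<Rightarrow> 'a \<Rightarrow> 'a) \<Rightarrow> bool" where
  "subdirectly_irreducible A m \<longleftrightarrow>
     (\<exists>x\<in>A. \<exists>y\<in>A. x \<noteq> y) \<and>
     (\<exists>\<mu>. congruence A m \<mu> \<and> \<mu> \<noteq> Id_on A \<and>
        (\<forall>\<theta>. congruence A m \<theta> \<and> \<theta> \<noteq> Id_on A \<longrightarrow> \<mu> \<subseteq> \<theta>))"

definition subalgebra :: "'a set \<Rightarrow> 'a set \<Rightarrow> ('a \<Rightarrow> 'a \<Rightarrow> 'a) \<Rightarrow> 'a \<Rightarrow> bool" where
  "subalgebra B A m z \<longleftrightarrow> B \<subseteq> A \<and> z \<in> B \<and> (\<forall>x\<in>B. \<forall>y\<in>B. m x y \<in> B)"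

definition height :: "'a set \<Rightarrow> ('a \<Rightarrow> 'a \<Rightarrow> 'a) \<Rightarrow> 'a \<Rightarrow> 'a \<Rightarrow> nat" where
  "height A m z a = card {x \<in> A. bck_le m z z x \<and> bck_le m z x a} - 1"

definition downset :: "'a set \<Rightarrow> 'a set \<Rightarrow> ('a \<Rightarrow> 'a \<Rightarrow> 'a) \<Rightarrow> 'a \<Rightarrow> bool" where
  "downset B A m z \<longleftrightarrow> (\<forall>x\<in>B. \<forall>y\<in>A. bck_le m z y x \<longrightarrow> y \<in> B)"

end

theory Submission
  imports Defs
begin

text \<open>Ideals of a BCK-algebra induce congruences, so a subdirectly irreducible algebra has a
  nonzero element lying in every nonzero ideal. Since polars are ideals, a finite subdirectly
  irreducible cBCK-algebra therefore has an atom e below every nonzero element. Then x \<ominus> e is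
  the predecessor of x, every principal downset is a chain, and heights are additive:
  h(x \<ominus> t) + h(t) = h(x) for t \<le> x. In a subalgebra B, a nonzero element d of least height
  lies below every nonzero element of B (their meet is nonzero, being above e), so subtracting
  d repeatedly shows that h(d) divides every height in B. Coprimality forces h(d) = 1, i.e.
  d = e, and closure of B under \<ominus> e then makes B a downset.\<close>

locale bck_algebra =
  fixes A :: "'a set" and m :: "'a \<Rightarrow> 'a \<Rightarrow> 'a" (infixl "\<ominus>" 65) and z :: 'a
  assumes bck: "BCK_algebra A m z"
begin

abbreviation below (infix "\<preceq>" 50) where "x \<preceq> y \<equiv> x \<ominus> y = z"

lemma zero_closed [simp]: "z \<in> A"
  using bck unfolding BCK_algebra_def by blast

lemma diff_closed [simp]: "x \<in> A \<Longrightarrow> y \<in> A \<Longrightarrow> x \<ominus> y \<in> A"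
  using bck unfolding BCK_algebra_def by blast

lemma bck_identity: "x \<in> A \<Longrightarrow> y \<in> A \<Longrightarrow> u \<in> A \<Longrightarrow> ((x \<ominus> y) \<ominus> (x \<ominus> u)) \<ominus> (u \<ominus> y) = z"
  using bck unfolding BCK_algebra_def by blast

lemma diff_zero [simp]: "x \<in> A \<Longrightarrow> x \<ominus> z = x"
  using bck unfolding BCK_algebra_def by blast

lemma zero_diff [simp]: "x \<in> A \<Longrightarrow> z \<ominus> x = z"
  using bck unfolding BCK_algebra_def by blast

lemma below_antisym: "x \<in> A \<Longrightarrow> y \<in> A \<Longrightarrow> x \<preceq> y \<Longrightarrow> y \<preceq> x \<Longrightarrow> x = y"
  using bck unfolding BCK_algebra_def by blast

lemma diff_self [simp]: "x \<in> A \<Longrightarrow> x \<ominus> x = z"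
  using bck_identity[of x z z] by simp

lemma diff_below: "x \<in> A \<Longrightarrow> y \<in> A \<Longrightarrow> x \<ominus> y \<preceq> x"
  using bck_identity[of x y z] by simp

lemma below_trans: "x \<in> A \<Longrightarrow> y \<in> A \<Longrightarrow> u \<in> A \<Longrightarrow> x \<preceq> y \<Longrightarrow> y \<preceq> u \<Longrightarrow> x \<preceq> u"
  using bck_identity[of x u y] by simp

lemma diff_mono: "x \<in> A \<Longrightarrow> y \<in> A \<Longrightarrow> u \<in> A \<Longrightarrow> x \<preceq> y \<Longrightarrow> x \<ominus> u \<preceq> y \<ominus> u"
  using bck_identity[of x u y] by simp

lemma diff_antimono: "x \<in> A \<Longrightarrow> y \<in> A \<Longrightarrow> u \<in> A \<Longrightarrow> x \<preceq> y \<Longrightarrow> u \<ominus> y \<preceq> u \<ominus> x"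
  using bck_identity[of u y x] by simp

lemma diff_diff_below: "x \<in> A \<Longrightarrow> y \<in> A \<Longrightarrow> x \<ominus> (x \<ominus> y) \<preceq> y"
  using bck_identity[of x z y] by simp

lemma diff_right_commute:
  assumes "x \<in> A" "y \<in> A" "u \<in> A"
  shows "(x \<ominus> y) \<ominus> u = (x \<ominus> u) \<ominus> y"
proof -
  have swap: "(x \<ominus> y) \<ominus> u \<preceq> (x \<ominus> u) \<ominus> y" if "x \<in> A" "y \<in> A" "u \<in> A" for x y u
  proof -
    have "(x \<ominus> y) \<ominus> u \<preceq> (x \<ominus> y) \<ominus> (x \<ominus> (x \<ominus> u))"
      using diff_antimono[OF _ _ _ diff_diff_below[of x u]] that by simp
    moreover have "(x \<ominus> y) \<ominus> (x \<ominus> (x \<ominus> u)) \<preceq> (x \<ominus> u) \<ominus> y"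
      using bck_identity[of x y "x \<ominus> u"] that by simp
    ultimately show ?thesis
      using below_trans[of "(x \<ominus> y) \<ominus> u" "(x \<ominus> y) \<ominus> (x \<ominus> (x \<ominus> u))"] that by simp
  qed
  show ?thesis
    using below_antisym[OF _ _ swap swap] assms by simp
qed

lemma diff_diff_diff_below: "x \<in> A \<Longrightarrow> y \<in> A \<Longrightarrow> u \<in> A \<Longrightarrow> (x \<ominus> u) \<ominus> (y \<ominus> u) \<preceq> x \<ominus> y"
  using diff_right_commute[of "x \<ominus> u" "y \<ominus> u" "x \<ominus> y"] bck_identity[of x u y] by simp

definition ideal :: "'a set \<Rightarrow> bool" where
  "ideal I \<longleftrightarrow> I \<subseteq> A \<and> z \<in> I \<and> (\<forall>x\<in>A. \<forall>y\<in>A. x \<ominus> y \<in> I \<longrightarrow> y \<in> I \<longrightarrow> x \<in> I)"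

lemma ideal_subset: "ideal I \<Longrightarrow> I \<subseteq> A"
  unfolding ideal_def by blast

lemma ideal_zero: "ideal I \<Longrightarrow> z \<in> I"
  unfolding ideal_def by blast

lemma ideal_closed: "ideal I \<Longrightarrow> x \<in> A \<Longrightarrow> y \<in> A \<Longrightarrow> x \<ominus> y \<in> I \<Longrightarrow> y \<in> I \<Longrightarrow> x \<in> I"
  unfolding ideal_def by blast

lemma ideal_downward: "ideal I \<Longrightarrow> x \<in> A \<Longrightarrow> y \<in> I \<Longrightarrow> x \<preceq> y \<Longrightarrow> x \<in> I"
  using ideal_closed[of I x y] ideal_zero[of I] ideal_subset[of I] by auto

definition ideal_congruence :: "'a set \<Rightarrow> ('a \<times> 'a) set" where
  "ideal_congruence I = {(x, y). x \<in> A \<and> y \<in> A \<and> x \<ominus> y \<in> I \<and> y \<ominus> x \<in> I}"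

lemma ideal_congruence_trans:
  assumes I: "ideal I" and "(x, y) \<in> ideal_congruence I" "(y, u) \<in> ideal_congruence I"
  shows "(x, u) \<in> ideal_congruence I"
proof -
  have A: "x \<in> A" "y \<in> A" "u \<in> A"
    and I_xy: "x \<ominus> y \<in> I" "y \<ominus> x \<in> I" and I_yu: "y \<ominus> u \<in> I" "u \<ominus> y \<in> I"
    using assms(2,3) unfolding ideal_congruence_def by auto
  have "(x \<ominus> u) \<ominus> (x \<ominus> y) \<in> I"
    by (rule ideal_downward[OF I _ I_yu(1)]) (use bck_identity[of x u y] A in simp_all)
  then have xu: "x \<ominus> u \<in> I"
    using ideal_closed[OF I _ _ _ I_xy(1)] A by simp
  have "(u \<ominus> x) \<ominus> (u \<ominus> y) \<in> I"
    by (rule ideal_downward[OF I _ I_xy(2)]) (use bck_identity[of u x y] A in simp_all)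
  then have ux: "u \<ominus> x \<in> I"
    using ideal_closed[OF I _ _ _ I_yu(2)] A by simp
  show ?thesis
    using xu ux A unfolding ideal_congruence_def by simp
qed

lemma congruence_ideal_congruence:
  assumes I: "ideal I"
  shows "congruence A m (ideal_congruence I)"
proof -
  have "equiv A (ideal_congruence I)"
  proof (rule equivI)
    show "ideal_congruence I \<subseteq> A \<times> A"
      unfolding ideal_congruence_def by auto
    show "refl_on A (ideal_congruence I)"
      using ideal_zero[OF I] unfolding refl_on_def ideal_congruence_def by auto
    show "sym (ideal_congruence I)"
      unfolding sym_def ideal_congruence_def by auto
    show "trans (ideal_congruence I)"
      unfolding trans_def using ideal_congruence_trans[OF I] by blast
  qed
  moreover have "(x1 \<ominus> x2, y1 \<ominus> y2) \<in> ideal_congruence I"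
    if "(x1, y1) \<in> ideal_congruence I" "(x2, y2) \<in> ideal_congruence I" for x1 y1 x2 y2
  proof -
    have A: "x1 \<in> A" "y1 \<in> A" "x2 \<in> A" "y2 \<in> A"
      and I1: "x1 \<ominus> y1 \<in> I" "y1 \<ominus> x1 \<in> I" and I2: "x2 \<ominus> y2 \<in> I" "y2 \<ominus> x2 \<in> I"
      using that unfolding ideal_congruence_def by auto
    have "(x1 \<ominus> x2, y1 \<ominus> x2) \<in> ideal_congruence I"
      using ideal_downward[OF I _ I1(1) diff_diff_diff_below[of x1 y1 x2]]
        ideal_downward[OF I _ I1(2) diff_diff_diff_below[of y1 x1 x2]] A
      unfolding ideal_congruence_def by simp
    moreover have "(y1 \<ominus> x2, y1 \<ominus> y2) \<in> ideal_congruence I"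
      using ideal_downward[OF I _ I2(2) bck_identity[of y1 x2 y2]]
        ideal_downward[OF I _ I2(1) bck_identity[of y1 y2 x2]] A
      unfolding ideal_congruence_def by simp
    ultimately show ?thesis
      using ideal_congruence_trans[OF I] by blast
  qed
  ultimately show ?thesis
    unfolding congruence_def by blast
qed

lemma subdirectly_irreducible_ex_common_element:
  assumes "subdirectly_irreducible A m"
  shows "\<exists>c\<in>A. c \<noteq> z \<and> (\<forall>I. ideal I \<longrightarrow> I \<noteq> {z} \<longrightarrow> c \<in> I)"
proof -
  obtain \<mu> where \<mu>: "congruence A m \<mu>" "\<mu> \<noteq> Id_on A"
    and least: "\<And>\<theta>. congruence A m \<theta> \<and> \<theta> \<noteq> Id_on A \<Longrightarrow> \<mu> \<subseteq> \<theta>"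
    using assms unfolding subdirectly_irreducible_def by blast
  have "equiv A \<mu>"
    using \<mu>(1) unfolding congruence_def by blast
  with \<mu>(2) obtain p q where pq: "(p, q) \<in> \<mu>" "p \<noteq> q" and A: "p \<in> A" "q \<in> A"
    unfolding equiv_def refl_on_def by auto
  have "p \<ominus> q \<in> I \<and> q \<ominus> p \<in> I" if I: "ideal I" "I \<noteq> {z}" for I
  proof -
    obtain d where "d \<in> I" "d \<noteq> z"
      using I ideal_zero by blast
    then have "(d, z) \<in> ideal_congruence I" "d \<in> A"
      using ideal_zero[OF I(1)] ideal_subset[OF I(1)] unfolding ideal_congruence_def by auto
    with \<open>d \<noteq> z\<close> have "ideal_congruence I \<noteq> Id_on A"
      by auto
    then have "\<mu> \<subseteq> ideal_congruence I"
      using least congruence_ideal_congruence[OF I(1)] by blast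
    then show ?thesis
      using pq unfolding ideal_congruence_def by auto
  qed
  moreover have "p \<ominus> q \<noteq> z \<or> q \<ominus> p \<noteq> z"
    using below_antisym A pq(2) by blast
  ultimately show ?thesis
    using A diff_closed by blast
qed

end

locale cbck_algebra = bck_algebra +
  assumes diff_diff_commute: "x \<in> A \<Longrightarrow> y \<in> A \<Longrightarrow> x \<ominus> (x \<ominus> y) = y \<ominus> (y \<ominus> x)"
begin

lemma diff_diff_cancel: "x \<in> A \<Longrightarrow> y \<in> A \<Longrightarrow> y \<preceq> x \<Longrightarrow> x \<ominus> (x \<ominus> y) = y"
  using diff_diff_commute[of x y] by simp

definition meet :: "'a \<Rightarrow> 'a \<Rightarrow> 'a" where
  "meet x y = x \<ominus> (x \<ominus> y)"

lemma meet_closed [simp]: "x \<in> A \<Longrightarrow> y \<in> A \<Longrightarrow> meet x y \<in> A"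
  unfolding meet_def by simp

lemma meet_below1: "x \<in> A \<Longrightarrow> y \<in> A \<Longrightarrow> meet x y \<preceq> x"
  unfolding meet_def using diff_below by simp

lemma meet_below2: "x \<in> A \<Longrightarrow> y \<in> A \<Longrightarrow> meet x y \<preceq> y"
  unfolding meet_def using diff_diff_below by simp

lemma meet_commute: "x \<in> A \<Longrightarrow> y \<in> A \<Longrightarrow> meet x y = meet y x"
  unfolding meet_def using diff_diff_commute by simp

lemma meet_greatest:
  assumes "x \<in> A" "y \<in> A" "w \<in> A" "w \<preceq> x" "w \<preceq> y"
  shows "w \<preceq> meet x y"
proof -
  have "x \<ominus> y \<preceq> x \<ominus> w"
    using diff_antimono assms by simp
  then have "x \<ominus> (x \<ominus> w) \<preceq> x \<ominus> (x \<ominus> y)"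
    using diff_antimono assms by simp
  then show ?thesis
    unfolding meet_def using diff_diff_cancel assms by simp
qed

lemma bij_betw_diff_interval:
  assumes "x \<in> A" "t \<in> A" "t \<preceq> x"
  shows "bij_betw (\<lambda>s. x \<ominus> s) {s \<in> A. t \<preceq> s \<and> s \<preceq> x} {r \<in> A. r \<preceq> x \<ominus> t}"
proof (rule bij_betw_byWitness[where f' = "\<lambda>r. x \<ominus> r"])
  show "\<forall>s\<in>{s \<in> A. t \<preceq> s \<and> s \<preceq> x}. x \<ominus> (x \<ominus> s) = s"
    using diff_diff_cancel assms(1) by simp
  have "r \<preceq> x" if "r \<in> A" "r \<preceq> x \<ominus> t" for r
    using below_trans[OF _ _ _ that(2) diff_below] that assms by simp
  then show "\<forall>r\<in>{r \<in> A. r \<preceq> x \<ominus> t}. x \<ominus> (x \<ominus> r) = r"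
    using diff_diff_cancel assms(1) by simp
  show "(\<lambda>s. x \<ominus> s) ` {s \<in> A. t \<preceq> s \<and> s \<preceq> x} \<subseteq> {r \<in> A. r \<preceq> x \<ominus> t}"
    using diff_antimono assms by auto
  have "x \<ominus> r \<in> A \<and> t \<preceq> x \<ominus> r \<and> x \<ominus> r \<preceq> x" if r: "r \<in> A" "r \<preceq> x \<ominus> t" for r
  proof -
    have "x \<ominus> (x \<ominus> t) \<preceq> x \<ominus> r"
      using diff_antimono r assms by simp
    then show ?thesis
      using diff_diff_cancel diff_below r assms by simp
  qed
  then show "(\<lambda>r. x \<ominus> r) ` {r \<in> A. r \<preceq> x \<ominus> t} \<subseteq> {s \<in> A. t \<preceq> s \<and> s \<preceq> x}"
    by auto
qed

definition polar :: "'a \<Rightarrow> 'a set" where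
  "polar d = {x \<in> A. meet x d = z}"

lemma ideal_polar:
  assumes d: "d \<in> A"
  shows "ideal (polar d)"
  unfolding ideal_def
proof (intro conjI ballI impI)
  show "polar d \<subseteq> A" "z \<in> polar d"
    unfolding polar_def meet_def using d by auto
  fix x y assume xy: "x \<in> A" "y \<in> A" "x \<ominus> y \<in> polar d" "y \<in> polar d"
  define w where "w = meet x d"
  have w: "w \<in> A" "w \<preceq> x" "w \<preceq> d"
    unfolding w_def using xy d meet_below1 meet_below2 by auto
  have "w \<ominus> y \<preceq> meet (x \<ominus> y) d"
    using meet_greatest diff_mono below_trans[OF _ _ _ diff_below[of w y] w(3)] w xy d by simp
  then have "w \<preceq> y"
    using xy w unfolding polar_def by simp
  then have "w \<preceq> meet y d"
    using meet_greatest xy d w by simp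
  then have "w = z"
    using xy w unfolding polar_def by simp
  then show "x \<in> polar d"
    using xy unfolding polar_def w_def by simp
qed

end

lemma cbck_algebraI: "cBCK_algebra A m z \<Longrightarrow> cbck_algebra A m z"
  unfolding cBCK_algebra_def cbck_algebra_def cbck_algebra_axioms_def bck_algebra_def by blast

locale finite_si_cbck_algebra = cbck_algebra +
  assumes finite_carrier: "finite A"
    and subdirectly_irreducible: "subdirectly_irreducible A m"
begin

definition down :: "'a \<Rightarrow> 'a set" where
  "down x = {t \<in> A. t \<preceq> x}"

lemma height_eq_card_down: "height A m z x = card (down x) - 1"
proof -
  have "{t \<in> A. bck_le m z z t \<and> bck_le m z t x} = down x"
    unfolding down_def bck_le_def by (intro Collect_cong) (use zero_diff in blast)
  then show ?thesis
    unfolding height_def by simp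
qed

lemma card_down: "x \<in> A \<Longrightarrow> card (down x) = Suc (height A m z x)"
proof -
  assume "x \<in> A"
  then have "z \<in> down x" "finite (down x)"
    using finite_carrier unfolding down_def by auto
  then show ?thesis
    unfolding height_eq_card_down by (metis Suc_pred' card_gt_0_iff empty_iff)
qed

lemma height_zero [simp]: "height A m z z = 0"
proof -
  have "down z = {z}"
    unfolding down_def by auto
  then show ?thesis
    unfolding height_eq_card_down by simp
qed

lemma height_less:
  assumes "x \<in> A" "t \<in> A" "t \<preceq> x" "t \<noteq> x"
  shows "height A m z t < height A m z x"
proof -
  have "down t \<subseteq> down x"
    using below_trans assms unfolding down_def by blast
  moreover have "x \<in> down x" "x \<notin> down t"
    using below_antisym assms unfolding down_def by auto
  ultimately have "card (down t) < card (down x)"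
    using finite_carrier unfolding down_def by (intro psubset_card_mono) auto
  then show ?thesis
    using card_down assms by simp
qed

lemma height_eq_0_iff: "x \<in> A \<Longrightarrow> height A m z x = 0 \<longleftrightarrow> x = z"
  by (cases "x = z") (use height_less[of x z] in auto)

text \<open>Take e nonzero of least height below the common element c of all nonzero ideals.
  If meet t e = 0, then t lies in the polar of e, a nonzero ideal, which would then contain
  c \<ge> e; so meet t e is nonzero and below e, hence equal to e.\<close>

lemma ex_atom: "\<exists>e\<in>A. e \<noteq> z \<and> (\<forall>t\<in>A. t \<noteq> z \<longrightarrow> e \<preceq> t)"
proof -
  obtain c where c: "c \<in> A" "c \<noteq> z" and c_mem: "\<And>I. ideal I \<Longrightarrow> I \<noteq> {z} \<Longrightarrow> c \<in> I"
    using subdirectly_irreducible_ex_common_element[OF subdirectly_irreducible] by blast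
  let ?P = "\<lambda>t. t \<in> A \<and> t \<noteq> z \<and> t \<preceq> c"
  obtain e where e: "?P e" and e_least: "\<And>t. ?P t \<Longrightarrow> height A m z e \<le> height A m z t"
    using ex_has_least_nat[of ?P c "height A m z"] c by auto
  have "e \<preceq> t" if t: "t \<in> A" "t \<noteq> z" for t
  proof -
    define w where "w = meet t e"
    have w: "w \<in> A" "w \<preceq> t" "w \<preceq> e"
      unfolding w_def using meet_below1 meet_below2 t e by auto
    have "w \<noteq> z"
    proof
      assume "w = z"
      then have "t \<in> polar e"
        unfolding polar_def w_def using t by simp
      with t have "polar e \<noteq> {z}"
        by auto
      then have "meet c e = z"
        using c_mem[OF ideal_polar] e unfolding polar_def by blast
      moreover have "meet c e = e"
        using meet_commute[of c e] e c unfolding meet_def by simp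
      ultimately show False
        using e by simp
    qed
    moreover have "w \<preceq> c"
      using below_trans[OF _ _ _ w(3)] w e c by simp
    ultimately have "height A m z e \<le> height A m z w"
      using e_least w by simp
    then have "w = e"
      using height_less[of e w] w e by fastforce
    then show ?thesis
      using w by simp
  qed
  then show ?thesis
    using e by blast
qed

definition atom :: 'a where
  "atom = (SOME e. e \<in> A \<and> e \<noteq> z \<and> (\<forall>t\<in>A. t \<noteq> z \<longrightarrow> e \<preceq> t))"

lemma atom_spec: "atom \<in> A \<and> atom \<noteq> z \<and> (\<forall>t\<in>A. t \<noteq> z \<longrightarrow> atom \<preceq> t)"
  using someI_ex[OF ex_atom[unfolded Bex_def]] unfolding atom_def .

lemma atom_closed [simp]: "atom \<in> A"
  using atom_spec by blast

lemma atom_nonzero: "atom \<noteq> z"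
  using atom_spec by blast

lemma atom_below: "t \<in> A \<Longrightarrow> t \<noteq> z \<Longrightarrow> atom \<preceq> t"
  using atom_spec by blast

lemma below_diff_atom:
  assumes "x \<in> A" "u \<in> A" "u \<preceq> x" "u \<noteq> x"
  shows "u \<preceq> x \<ominus> atom"
proof -
  have "x \<ominus> u \<noteq> z"
    using below_antisym assms by blast
  then have "x \<ominus> (x \<ominus> u) \<preceq> x \<ominus> atom"
    using diff_antimono atom_below atom_closed assms by simp
  then show ?thesis
    using diff_diff_cancel assms by simp
qed

lemma height_diff_atom_less:
  assumes "x \<in> A" "x \<noteq> z"
  shows "height A m z (x \<ominus> atom) < height A m z x"
proof -
  have "meet x atom = atom"
    using meet_commute[of x atom] atom_below[OF assms] atom_closed assms unfolding meet_def by simp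
  then have "x \<ominus> atom \<noteq> x"
    using atom_nonzero assms unfolding meet_def by auto
  then show ?thesis
    using height_less diff_below atom_closed assms by simp
qed

lemma below_linear:
  assumes "x \<in> A" "u \<in> A" "v \<in> A" "u \<preceq> x" "v \<preceq> x"
  shows "u \<preceq> v \<or> v \<preceq> u"
  using assms
proof (induction "height A m z x" arbitrary: x rule: less_induct)
  case less
  show ?case
  proof (cases "u = x \<or> v = x")
    case True
    then show ?thesis
      using less.prems by auto
  next
    case False
    then have "x \<noteq> z"
      using less.prems(2,4) diff_zero by metis
    moreover have "u \<preceq> x \<ominus> atom" "v \<preceq> x \<ominus> atom"
      using below_diff_atom less.prems False by auto
    ultimately show ?thesis
      using less.hyps[OF height_diff_atom_less] less.prems atom_closed by simp
  qed
qed

text \<open>The chain below x splits at t into the chain below t and the interval [t, x], and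
  the interval is mapped bijectively onto the chain below x \<ominus> t by s \<mapsto> x \<ominus> s.\<close>

lemma height_diff:
  assumes "x \<in> A" "t \<in> A" "t \<preceq> x"
  shows "height A m z (x \<ominus> t) + height A m z t = height A m z x"
proof -
  define U where "U = {s \<in> A. t \<preceq> s \<and> s \<preceq> x}"
  have "card U = card (down (x \<ominus> t))"
    using bij_betw_same_card[OF bij_betw_diff_interval[OF assms]] unfolding U_def down_def .
  moreover have "down x = down t \<union> U"
    using below_linear[of x t] below_trans[of _ t x] assms unfolding down_def U_def by blast
  moreover have "down t \<inter> U = {t}"
    using below_antisym assms unfolding down_def U_def by auto
  moreover have "finite (down t)" "finite U"
    using finite_carrier unfolding down_def U_def by auto
  ultimately have "card (down (x \<ominus> t)) + card (down t) = card (down x) + 1"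
    using card_Un_Int[of "down t" U] by simp
  then show ?thesis
    using card_down assms by simp
qed

lemma height_eq_1_imp_eq_atom:
  assumes "x \<in> A" "height A m z x = 1"
  shows "x = atom"
proof (rule ccontr)
  assume "x \<noteq> atom"
  moreover have "x \<noteq> z"
    using assms by auto
  ultimately have "height A m z atom < 1"
    using height_less atom_below atom_closed assms by metis
  then show False
    using height_eq_0_iff atom_closed atom_nonzero by simp
qed

lemma below_of_least_height:
  assumes B: "subalgebra B A m z" and d: "d \<in> B" "d \<noteq> z"
    and least: "\<And>y. y \<in> B \<Longrightarrow> y \<noteq> z \<Longrightarrow> height A m z d \<le> height A m z y"
    and x: "x \<in> B" "x \<noteq> z"
  shows "d \<preceq> x"
proof -
  have A: "d \<in> A" "x \<in> A"
    using B d x unfolding subalgebra_def by auto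
  define w where "w = meet d x"
  have "w \<in> B"
    using B d x unfolding subalgebra_def meet_def w_def by blast
  have "atom \<preceq> w"
    unfolding w_def using meet_greatest atom_below atom_closed A d x by simp
  then have "w \<noteq> z"
    using atom_closed atom_nonzero by auto
  with \<open>w \<in> B\<close> have "height A m z d \<le> height A m z w"
    using least by blast
  then have "w = d"
    using height_less[of d w] meet_below1 A unfolding w_def by fastforce
  then show ?thesis
    using meet_below2 A unfolding w_def by metis
qed

lemma height_dvd_of_below_all:
  assumes B: "subalgebra B A m z" and d: "d \<in> B" "d \<noteq> z"
    and below: "\<And>y. y \<in> B \<Longrightarrow> y \<noteq> z \<Longrightarrow> d \<preceq> y"
    and x: "x \<in> B"
  shows "height A m z d dvd height A m z x"
  using x
proof (induction "height A m z x" arbitrary: x rule: less_induct)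
  case less
  show ?case
  proof (cases "x = z")
    case True
    then show ?thesis
      by simp
  next
    case False
    have A: "d \<in> A" "x \<in> A"
      using B d less.prems unfolding subalgebra_def by auto
    have "x \<ominus> d \<in> B"
      using B d less.prems unfolding subalgebra_def by blast
    moreover have split: "height A m z (x \<ominus> d) + height A m z d = height A m z x"
      using height_diff below[OF less.prems False] A by blast
    moreover have "height A m z d \<noteq> 0"
      using height_eq_0_iff A d by simp
    ultimately have "height A m z d dvd height A m z (x \<ominus> d)"
      using less.hyps by simp
    then show ?thesis
      using split by (metis dvd_add dvd_refl)
  qed
qed

lemma atom_mem_subalgebra:
  assumes B: "subalgebra B A m z" and ab: "a \<in> B" "b \<in> B"
    and coprime: "gcd (height A m z a) (height A m z b) = 1"
  shows "atom \<in> B"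
proof -
  have "\<exists>x\<in>B. x \<noteq> z"
  proof (rule ccontr)
    assume "\<not> ?thesis"
    then have "a = z" "b = z"
      using ab by blast+
    then show False
      using coprime by simp
  qed
  then obtain d where d: "d \<in> B" "d \<noteq> z"
    and least: "\<And>y. y \<in> B \<Longrightarrow> y \<noteq> z \<Longrightarrow> height A m z d \<le> height A m z y"
    using ex_has_least_nat[of "\<lambda>x. x \<in> B \<and> x \<noteq> z" _ "height A m z"] by blast
  have "height A m z d dvd height A m z a" "height A m z d dvd height A m z b"
    using height_dvd_of_below_all[OF B d below_of_least_height[OF B d least]] ab by auto
  then have "height A m z d = 1"
    using coprime by (metis gcd_greatest nat_dvd_1_iff_1)
  moreover have "d \<in> A"
    using B d unfolding subalgebra_def by auto
  ultimately show ?thesis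
    using height_eq_1_imp_eq_atom d by blast
qed

lemma downset_if_atom_mem_subalgebra:
  assumes B: "subalgebra B A m z" and atom_mem: "atom \<in> B"
  shows "downset B A m z"
proof -
  have "y \<in> B" if "x \<in> B" "y \<in> A" "y \<preceq> x" for x y
    using that
  proof (induction "height A m z x" arbitrary: x rule: less_induct)
    case less
    have x: "x \<in> A" "x \<ominus> atom \<in> B"
      using B atom_mem less.prems(1) unfolding subalgebra_def by auto
    show ?case
    proof (cases "y = x")
      case True
      then show ?thesis
        using less.prems by simp
    next
      case False
      then have "x \<noteq> z"
        using less.prems(2,3) diff_zero by metis
      then have "height A m z (x \<ominus> atom) < height A m z x"
        using height_diff_atom_less x(1) by blast
      moreover have "y \<preceq> x \<ominus> atom"
        using below_diff_atom x(1) less.prems(2,3) False by blast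
      ultimately show ?thesis
        using less.hyps x(2) less.prems(2) by blast
    qed
  qed
  then show ?thesis
    unfolding downset_def bck_le_def by blast
qed

end

theorem mainTheorem3:
  fixes A B :: "'a set" and m :: "'a \<Rightarrow> 'a \<Rightarrow> 'a" and z :: 'a
  assumes "finite A"
    and "cBCK_algebra A m z"
    and "subdirectly_irreducible A m"
    and "subalgebra B A m z"
    and "\<exists>a\<in>B. \<exists>b\<in>B. gcd (height A m z a) (height A m z b) = 1"
  shows "downset B A m z"
proof -
  interpret finite_si_cbck_algebra A m z
    by (intro finite_si_cbck_algebra.intro finite_si_cbck_algebra_axioms.intro cbck_algebraI assms(1-3))
  from assms(5) obtain a b where "a \<in> B" "b \<in> B" "gcd (height A m z a) (height A m z b) = 1"
    by (elim bexE) (rule that)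
  then have "atom \<in> B"
    by (rule atom_mem_subalgebra[OF assms(4)])
  then show ?thesis
    by (rule downset_if_atom_mem_subalgebra[OF assms(4)])
qed

end
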